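(* Let $\Psi,\alpha,\Psi'$ be a well-formed declarative context and $\tau$ a monotype with $\Psi\vdash\tau$. Then: (1) If $\Psi,\alpha,\Psi'\vdash e'\Leftarrow C$ then $\Psi,[\tau/\alpha]\Psi'\vdash[\tau/\alpha]e'\Leftarrow[\tau/\alpha]C$. (2) If $\Psi,\alpha,\Psi'\vdash e'\Rightarrow C$ then $\Psi,[\tau/\alpha]\Psi'\vdash[\tau/\alpha]e'\Rightarrow[\tau/\alpha]C$. (3) If $\Psi,\alpha,\Psi'\vdash e'\bullet B\Rightarrow\!\!\Rightarrow C$ then $\Psi,[\tau/\alpha]\Psi'\vdash[\tau/\alpha]e'\bullet[\tau/\alpha]B\Rightarrow\!\!\Rightarrow[\tau/\alpha]C$. Moreover, in each case the resulting derivation contains no more applications of typing rules than the given one (applications of subtyping rules inside the derivation are not counted).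
   Context: Types $A,B,C ::= 1\mid\alpha\mid\forall\alpha.A\mid A\to B$; monotypes $\sigma,\tau ::= 1\mid\alpha\mid\sigma\to\tau$; declarative contexts $\Psi ::= \cdot\mid\Psi,\alpha\mid\Psi,x:A$. $[\tau/\alpha]$ denotes capture-avoiding substitution, applied to types, to all types in a context, and to all type annotations in a term. Well-formedness $\Psi\vdash A$: all free type variables of $A$ are declared in $\Psi$. Declarative subtyping $\Psi\vdash A\le B$: least relation with $\alpha\in\Psi\Rightarrow\Psi\vdash\alpha\le\alpha$; $\Psi\vdash1\le1$; ($\Psi\vdash B_1\le A_1$, $\Psi\vdash A_2\le B_2$) $\Rightarrow\Psi\vdash A_1\to A_2\le B_1\to B_2$; ($\Psi\vdash\sigma$ monotype, $\Psi\vdash[\sigma/\beta]A\le B$) $\Rightarrow\Psi\vdash\forall\beta.A\le B$; $\Psi,\beta\vdash A\le B\Rightarrow\Psi\vdash A\le\forall\beta.B$. Terms $e ::= x\mid()\mid\lambda x.e\mid e_1\,e_2\mid(e:A)$. The typing rules (checking $\Leftarrow$, synthesis $\Rightarrow$, application $e\bullet A\Rightarrow\!\!\Rightarrow C$) are: $(x:A)\in\Psi\Rightarrow\Psi\vdash x\Rightarrow A$; ($\Psi\vdash e\Rightarrow A$, $\Psi\vdash A\le B$) $\Rightarrow\Psi\vdash e\Leftarrow B$; ($\Psi\vdash A$, $\Psi\vdash e\Leftarrow A$) $\Rightarrow\Psi\vdash(e:A)\Rightarrow A$; $\Psi\vdash()\Leftarrow1$; $\Psi\vdash()\Rightarrow1$;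 $\Psi,\beta\vdash e\Leftarrow A\Rightarrow\Psi\vdash e\Leftarrow\forall\beta.A$; ($\Psi\vdash\sigma$ monotype, $\Psi\vdash e\bullet[\sigma/\beta]A\Rightarrow\!\!\Rightarrow C$) $\Rightarrow\Psi\vdash e\bullet\forall\beta.A\Rightarrow\!\!\Rightarrow C$; $\Psi,x:A\vdash e\Leftarrow B\Rightarrow\Psi\vdash\lambda x.e\Leftarrow A\to B$; ($\Psi\vdash\sigma\to\sigma'$ monotypes, $\Psi,x:\sigma\vdash e\Leftarrow\sigma'$) $\Rightarrow\Psi\vdash\lambda x.e\Rightarrow\sigma\to\sigma'$; ($\Psi\vdash e_1\Rightarrow A$, $\Psi\vdash e_2\bullet A\Rightarrow\!\!\Rightarrow C$) $\Rightarrow\Psi\vdash e_1\,e_2\Rightarrow C$; $\Psi\vdash e\Leftarrow A\Rightarrow\Psi\vdash e\bullet A\to C\Rightarrow\!\!\Rightarrow C$. *)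

theory Defs
  imports Main
begin

text \<open>Locally nameless representation: bound type variables are de Bruijn
indices (TBound), free type variables are names (TFree). The paper's
\<open>\<forall>\<alpha>. A\<close> is \<open>TAll A\<close> where \<alpha> is the bound index 0 in A.\<close>

type_synonym tvar = nat
type_synonym var = nat

datatype ty = TUnit | TFree tvar | TBound nat | TAll ty | TArr ty ty

datatype tm = Var var | Unit | Lam var tm | App tm tm | Ann tm ty

datatype binding = CTy tvar | CVar var ty

type_synonym ctx = "binding list"  \<comment> \<open>extended on the right: \<open>\<Psi>, b\<close> is \<open>\<Psi> @ [b]\<close>\<close>

fun ftv :: "ty \<Rightarrow> tvar set" where
  "ftv TUnit = {}"
| "ftv (TFree a) = {a}"
| "ftv (TBound i) = {}"
| "ftv (TAll A) = ftv A"
| "ftv (TArr A B) = ftv A \<union> ftv B"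

fun lc_at :: "nat \<Rightarrow> ty \<Rightarrow> bool" where
  "lc_at k TUnit = True"
| "lc_at k (TFree a) = True"
| "lc_at k (TBound i) = (i < k)"
| "lc_at k (TAll A) = lc_at (Suc k) A"
| "lc_at k (TArr A B) = (lc_at k A \<and> lc_at k B)"

fun open_at :: "nat \<Rightarrow> ty \<Rightarrow> ty \<Rightarrow> ty" where
  "open_at k s TUnit = TUnit"
| "open_at k s (TFree a) = TFree a"
| "open_at k s (TBound i) = (if i = k then s else TBound i)"
| "open_at k s (TAll A) = TAll (open_at (Suc k) s A)"
| "open_at k s (TArr A B) = TArr (open_at k s A) (open_at k s B)"

definition open_ty :: "ty \<Rightarrow> ty \<Rightarrow> ty" where
  "open_ty A s = open_at 0 s A"

text \<open>Substitution \<open>[\<tau>/\<alpha>]\<close> of a free type variable (capture-avoiding by construction).\<close>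
fun subst :: "tvar \<Rightarrow> ty \<Rightarrow> ty \<Rightarrow> ty" where
  "subst a t TUnit = TUnit"
| "subst a t (TFree b) = (if b = a then t else TFree b)"
| "subst a t (TBound i) = TBound i"
| "subst a t (TAll A) = TAll (subst a t A)"
| "subst a t (TArr A B) = TArr (subst a t A) (subst a t B)"

fun subst_tm :: "tvar \<Rightarrow> ty \<Rightarrow> tm \<Rightarrow> tm" where
  "subst_tm a t (Var x) = Var x"
| "subst_tm a t Unit = Unit"
| "subst_tm a t (Lam x e) = Lam x (subst_tm a t e)"
| "subst_tm a t (App e1 e2) = App (subst_tm a t e1) (subst_tm a t e2)"
| "subst_tm a t (Ann e A) = Ann (subst_tm a t e) (subst a t A)"

fun subst_bind :: "tvar \<Rightarrow> ty \<Rightarrow> binding \<Rightarrow> binding" where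
  "subst_bind a t (CTy b) = CTy b"
| "subst_bind a t (CVar x A) = CVar x (subst a t A)"

definition subst_ctx :: "tvar \<Rightarrow> ty \<Rightarrow> ctx \<Rightarrow> ctx" where
  "subst_ctx a t \<Psi> = map (subst_bind a t) \<Psi>"

fun ftv_tm :: "tm \<Rightarrow> tvar set" where
  "ftv_tm (Var x) = {}"
| "ftv_tm Unit = {}"
| "ftv_tm (Lam x e) = ftv_tm e"
| "ftv_tm (App e1 e2) = ftv_tm e1 \<union> ftv_tm e2"
| "ftv_tm (Ann e A) = ftv_tm e \<union> ftv A"

fun mono :: "ty \<Rightarrow> bool" where
  "mono TUnit = True"
| "mono (TFree a) = True"
| "mono (TBound i) = True"
| "mono (TAll A) = False"
| "mono (TArr A B) = (mono A \<and> mono B)"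

definition ctx_tvars :: "ctx \<Rightarrow> tvar set" where
  "ctx_tvars \<Psi> = {a. CTy a \<in> set \<Psi>}"

definition ctx_vars :: "ctx \<Rightarrow> var set" where
  "ctx_vars \<Psi> = {x. \<exists>A. CVar x A \<in> set \<Psi>}"

definition ctx_fv :: "ctx \<Rightarrow> tvar set" where
  "ctx_fv \<Psi> = ctx_tvars \<Psi> \<union> (\<Union>{ftv A | x A. CVar x A \<in> set \<Psi>})"

text \<open>Lookup of a term variable: the most recent (rightmost) binding.\<close>
fun lookup :: "ctx \<Rightarrow> var \<Rightarrow> ty option" where
  "lookup [] x = None"
| "lookup (b # \<Psi>) x = (case lookup \<Psi> x of Some A \<Rightarrow> Some A
     | None \<Rightarrow> (case b of CVar y A \<Rightarrow> if y = x then Some A else None | CTy _ \<Rightarrow> None))"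

definition wf_ty :: "ctx \<Rightarrow> ty \<Rightarrow> bool" where
  "wf_ty \<Psi> A \<longleftrightarrow> lc_at 0 A \<and> ftv A \<subseteq> ctx_tvars \<Psi>"

definition wf_mono :: "ctx \<Rightarrow> ty \<Rightarrow> bool" where
  "wf_mono \<Psi> s \<longleftrightarrow> mono s \<and> wf_ty \<Psi> s"

inductive wf_ctx :: "ctx \<Rightarrow> bool" where
  "wf_ctx []"
| "wf_ctx \<Psi> \<Longrightarrow> a \<notin> ctx_tvars \<Psi> \<Longrightarrow> wf_ctx (\<Psi> @ [CTy a])"
| "wf_ctx \<Psi> \<Longrightarrow> x \<notin> ctx_vars \<Psi> \<Longrightarrow> wf_ty \<Psi> A \<Longrightarrow> wf_ctx (\<Psi> @ [CVar x A])"

inductive sub :: "ctx \<Rightarrow> ty \<Rightarrow> ty \<Rightarrow> bool" where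
  sub_var: "a \<in> ctx_tvars \<Psi> \<Longrightarrow> sub \<Psi> (TFree a) (TFree a)"
| sub_unit: "sub \<Psi> TUnit TUnit"
| sub_arr: "sub \<Psi> B1 A1 \<Longrightarrow> sub \<Psi> A2 B2 \<Longrightarrow> sub \<Psi> (TArr A1 A2) (TArr B1 B2)"
| sub_allL: "wf_mono \<Psi> s \<Longrightarrow> sub \<Psi> (open_ty A s) B \<Longrightarrow> sub \<Psi> (TAll A) B"
| sub_allR: "b \<notin> ctx_fv \<Psi> \<Longrightarrow> b \<notin> ftv A \<Longrightarrow> b \<notin> ftv B \<Longrightarrow>
             sub (\<Psi> @ [CTy b]) A (open_ty B (TFree b)) \<Longrightarrow> sub \<Psi> A (TAll B)"

text \<open>Typing judgments, indexed by the number n of typing-rule applications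
in the derivation (subtyping derivations are not counted):
\<open>chk \<Psi> e A n\<close> is \<open>\<Psi> \<turnstile> e \<Leftarrow> A\<close>, \<open>syn \<Psi> e A n\<close> is \<open>\<Psi> \<turnstile> e \<Rightarrow> A\<close>,
\<open>app \<Psi> e A C n\<close> is \<open>\<Psi> \<turnstile> e \<bullet> A \<Rightarrow>\<Rightarrow> C\<close>.\<close>
inductive chk :: "ctx \<Rightarrow> tm \<Rightarrow> ty \<Rightarrow> nat \<Rightarrow> bool"
  and syn :: "ctx \<Rightarrow> tm \<Rightarrow> ty \<Rightarrow> nat \<Rightarrow> bool"
  and app :: "ctx \<Rightarrow> tm \<Rightarrow> ty \<Rightarrow> ty \<Rightarrow> nat \<Rightarrow> bool" where
  syn_var: "lookup \<Psi> x = Some A \<Longrightarrow> syn \<Psi> (Var x) A 1"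
| chk_sub: "syn \<Psi> e A n \<Longrightarrow> sub \<Psi> A B \<Longrightarrow> chk \<Psi> e B (Suc n)"
| syn_ann: "wf_ty \<Psi> A \<Longrightarrow> chk \<Psi> e A n \<Longrightarrow> syn \<Psi> (Ann e A) A (Suc n)"
| chk_unit: "chk \<Psi> Unit TUnit 1"
| syn_unit: "syn \<Psi> Unit TUnit 1"
| chk_all: "b \<notin> ctx_fv \<Psi> \<Longrightarrow> b \<notin> ftv A \<Longrightarrow> b \<notin> ftv_tm e \<Longrightarrow>
            chk (\<Psi> @ [CTy b]) e (open_ty A (TFree b)) n \<Longrightarrow> chk \<Psi> e (TAll A) (Suc n)"
| app_all: "wf_mono \<Psi> s \<Longrightarrow> app \<Psi> e (open_ty A s) C n \<Longrightarrow> app \<Psi> e (TAll A) C (Suc n)"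
| chk_lam: "chk (\<Psi> @ [CVar x A]) e B n \<Longrightarrow> chk \<Psi> (Lam x e) (TArr A B) (Suc n)"
| syn_lam: "wf_mono \<Psi> (TArr s s') \<Longrightarrow> chk (\<Psi> @ [CVar x s]) e s' n \<Longrightarrow>
            syn \<Psi> (Lam x e) (TArr s s') (Suc n)"
| syn_app: "syn \<Psi> e1 A n1 \<Longrightarrow> app \<Psi> e2 A C n2 \<Longrightarrow> syn \<Psi> (App e1 e2) C (Suc (n1 + n2))"
| app_arr: "chk \<Psi> e A n \<Longrightarrow> app \<Psi> e (TArr A C) C (Suc n)"

end

theory Submission
  imports Defs
begin

text \<open>Substituting \<open>\<tau>\<close> for \<open>\<alpha>\<close> maps every typing rule instance to an instance of the
same rule, so a derivation is transformed rule by rule and its size is preserved exactly.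
The only work lies in the side conditions: well-formedness and monotypes are stable under
substitution because \<open>\<tau>\<close> is a well-formed monotype, substitution commutes with opening
because \<open>\<tau>\<close> is locally closed, and a variable fresh for the original context is fresh for
\<open>\<tau>\<close> (declared in \<open>\<Psi>\<close>) and hence for the substituted context. Variables bound in \<open>\<Psi>\<close>
keep their types, as \<open>\<alpha>\<close> does not occur in them by well-formedness of \<open>\<Psi>, \<alpha>\<close>.\<close>

lemma ftv_subst: "ftv (subst a t A) \<subseteq> (ftv A - {a}) \<union> ftv t"
  by (induction A) auto

lemma ftv_tm_subst_tm: "ftv_tm (subst_tm a t e) \<subseteq> ftv_tm e \<union> ftv t"
  by (induction e) (use ftv_subst[of a t] in auto)

lemma subst_fresh: "a \<notin> ftv A \<Longrightarrow> subst a t A = A"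
  by (induction A) auto

lemma mono_subst: "mono A \<Longrightarrow> mono t \<Longrightarrow> mono (subst a t A)"
  by (induction A) auto

lemma lc_at_mono: "lc_at k A \<Longrightarrow> k \<le> j \<Longrightarrow> lc_at j A"
  by (induction A arbitrary: k j) auto

lemma lc_at_subst: "lc_at k A \<Longrightarrow> lc_at 0 t \<Longrightarrow> lc_at k (subst a t A)"
  by (induction A arbitrary: k) (auto intro: lc_at_mono)

lemma open_at_lc: "lc_at k A \<Longrightarrow> k \<le> j \<Longrightarrow> open_at j s A = A"
  by (induction A arbitrary: k j) auto

lemma subst_open_at:
  "lc_at 0 t \<Longrightarrow> subst a t (open_at k s A) = open_at k (subst a t s) (subst a t A)"
  by (induction A arbitrary: k) (auto intro: open_at_lc[symmetric])

lemma subst_open_ty: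
  "lc_at 0 t \<Longrightarrow> subst a t (open_ty A s) = open_ty (subst a t A) (subst a t s)"
  unfolding open_ty_def by (rule subst_open_at)

lemma lookup_append:
  "lookup (xs @ ys) x = (case lookup ys x of Some A \<Rightarrow> Some A | None \<Rightarrow> lookup xs x)"
  by (induction xs) (auto split: option.split)

lemma lookup_subst_ctx: "lookup (subst_ctx a t G) x = map_option (subst a t) (lookup G x)"
  unfolding subst_ctx_def by (induction G) (auto split: option.split binding.split)

lemma subst_ctx_snoc: "subst_ctx a t (G @ [b]) = subst_ctx a t G @ [subst_bind a t b]"
  unfolding subst_ctx_def by simp

lemma subst_bind_eq_CTy: "subst_bind a t c = CTy b \<longleftrightarrow> c = CTy b"
  by (cases c) auto

lemma subst_bind_eq_CVar: "subst_bind a t c = CVar x A' \<longleftrightarrow> (\<exists>A. A' = subst a t A \<and> c = CVar x A)"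
  by (cases c) auto

lemma CTy_in_subst_ctx: "CTy b \<in> set (subst_ctx a t G) \<longleftrightarrow> CTy b \<in> set G"
  unfolding subst_ctx_def by (auto simp: image_iff subst_bind_eq_CTy eq_commute[of "CTy b"])

lemma CVar_in_subst_ctx:
  "CVar x A' \<in> set (subst_ctx a t G) \<longleftrightarrow> (\<exists>A. A' = subst a t A \<and> CVar x A \<in> set G)"
  unfolding subst_ctx_def by (auto simp: image_iff subst_bind_eq_CVar eq_commute[of "CVar x A'"])

lemma wf_ty_subst:
  assumes "wf_ty (\<Psi> @ [CTy \<alpha>] @ \<Psi>') A" and "wf_ty \<Psi> \<tau>"
  shows "wf_ty (\<Psi> @ subst_ctx \<alpha> \<tau> \<Psi>') (subst \<alpha> \<tau> A)"
  using assms ftv_subst[of \<alpha> \<tau> A]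
  by (auto simp: wf_ty_def ctx_tvars_def CTy_in_subst_ctx intro: lc_at_subst)

lemma wf_mono_subst:
  assumes "wf_mono (\<Psi> @ [CTy \<alpha>] @ \<Psi>') A" and "wf_mono \<Psi> \<tau>"
  shows "wf_mono (\<Psi> @ subst_ctx \<alpha> \<tau> \<Psi>') (subst \<alpha> \<tau> A)"
  using assms wf_ty_subst mono_subst unfolding wf_mono_def by blast

lemma fresh_subst_ctx:
  assumes "b \<notin> ctx_fv (\<Psi> @ [CTy \<alpha>] @ \<Psi>')" and "ftv \<tau> \<subseteq> ctx_tvars \<Psi>"
  shows "b \<noteq> \<alpha>" and "b \<notin> ftv \<tau>" and "b \<notin> ctx_fv (\<Psi> @ subst_ctx \<alpha> \<tau> \<Psi>')"
proof -
  show "b \<noteq> \<alpha>" and "b \<notin> ftv \<tau>"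
    using assms unfolding ctx_fv_def ctx_tvars_def by auto
  then show "b \<notin> ctx_fv (\<Psi> @ subst_ctx \<alpha> \<tau> \<Psi>')"
    using assms(1) ftv_subst[of \<alpha> \<tau>] unfolding ctx_fv_def ctx_tvars_def
    by (fastforce simp: CTy_in_subst_ctx CVar_in_subst_ctx)
qed

lemma sub_refl: "wf_mono G A \<Longrightarrow> sub G A A"
  unfolding wf_mono_def wf_ty_def by (induction A) (auto intro: sub.intros)

lemma sub_subst:
  assumes "sub (\<Psi> @ [CTy \<alpha>] @ \<Psi>') A B" and \<tau>: "wf_mono \<Psi> \<tau>"
  shows "sub (\<Psi> @ subst_ctx \<alpha> \<tau> \<Psi>') (subst \<alpha> \<tau> A) (subst \<alpha> \<tau> B)"
  using assms(1)
proof (induction "\<Psi> @ [CTy \<alpha>] @ \<Psi>'" A B arbitrary: \<Psi>' rule: sub.induct)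
  case (sub_var a)
  then have "wf_mono (\<Psi> @ subst_ctx \<alpha> \<tau> \<Psi>') (subst \<alpha> \<tau> (TFree a))"
    using \<tau> by (intro wf_mono_subst) (auto simp: wf_mono_def wf_ty_def)
  then show ?case by (rule sub_refl)
next
  case sub_unit
  then show ?case by (auto intro: sub.intros)
next
  case sub_arr
  then show ?case by (auto intro: sub.intros)
next
  case (sub_allL s A B)
  then show ?case
    using \<tau> wf_mono_subst[of \<Psi> \<alpha> \<Psi>' s \<tau>]
    by (auto simp: subst_open_ty wf_mono_def wf_ty_def intro: sub.intros)
next
  case (sub_allR b A B)
  have \<tau>': "lc_at 0 \<tau>" "ftv \<tau> \<subseteq> ctx_tvars \<Psi>" using \<tau> by (auto simp: wf_mono_def wf_ty_def)
  note fresh = fresh_subst_ctx[OF sub_allR(1) \<tau>'(2)]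
  have "sub (\<Psi> @ subst_ctx \<alpha> \<tau> \<Psi>' @ [CTy b]) (subst \<alpha> \<tau> A) (open_ty (subst \<alpha> \<tau> B) (TFree b))"
    using sub_allR(5)[of "\<Psi>' @ [CTy b]"] fresh(1) \<tau>'(1) by (simp add: subst_open_ty subst_ctx_snoc)
  then show ?case
    using sub_allR(2,3) fresh ftv_subst[of \<alpha> \<tau>] by (auto intro!: sub.sub_allR)
qed

lemma wf_ctx_appendD: "wf_ctx (xs @ ys) \<Longrightarrow> wf_ctx xs"
  by (induction ys rule: rev_induct) (auto elim: wf_ctx.cases)

lemma wf_ctx_lookup: "wf_ctx G \<Longrightarrow> lookup G x = Some A \<Longrightarrow> ftv A \<subseteq> ctx_tvars G"
  by (induction arbitrary: A rule: wf_ctx.induct)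
    (auto simp: lookup_append ctx_tvars_def wf_ty_def split: option.splits if_splits)

lemma wf_ctx_snoc_CTy_lookup: "wf_ctx (\<Psi> @ [CTy a]) \<Longrightarrow> lookup \<Psi> x = Some A \<Longrightarrow> a \<notin> ftv A"
  by (erule wf_ctx.cases) (auto dest: wf_ctx_lookup)

theorem typing_subst:
  assumes wf: "wf_ctx (\<Psi> @ [CTy \<alpha>])" and \<tau>: "wf_mono \<Psi> \<tau>"
  shows "chk (\<Psi> @ [CTy \<alpha>] @ \<Psi>') e C n \<Longrightarrow>
           chk (\<Psi> @ subst_ctx \<alpha> \<tau> \<Psi>') (subst_tm \<alpha> \<tau> e) (subst \<alpha> \<tau> C) n"
    and "syn (\<Psi> @ [CTy \<alpha>] @ \<Psi>') e C n \<Longrightarrow>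
           syn (\<Psi> @ subst_ctx \<alpha> \<tau> \<Psi>') (subst_tm \<alpha> \<tau> e) (subst \<alpha> \<tau> C) n"
    and "app (\<Psi> @ [CTy \<alpha>] @ \<Psi>') e B C n \<Longrightarrow>
           app (\<Psi> @ subst_ctx \<alpha> \<tau> \<Psi>') (subst_tm \<alpha> \<tau> e) (subst \<alpha> \<tau> B) (subst \<alpha> \<tau> C) n"
proof (induction "\<Psi> @ [CTy \<alpha>] @ \<Psi>'" e C n and "\<Psi> @ [CTy \<alpha>] @ \<Psi>'" e C n
    and "\<Psi> @ [CTy \<alpha>] @ \<Psi>'" e B C n arbitrary: \<Psi>' and \<Psi>' and \<Psi>' rule: chk_syn_app.inducts)
  case (syn_var x A)
  have "lookup (\<Psi> @ subst_ctx \<alpha> \<tau> \<Psi>') x = Some (subst \<alpha> \<tau> A)"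
  proof (cases "lookup \<Psi>' x")
    case None
    with syn_var have "lookup \<Psi> x = Some A" by (simp add: lookup_append)
    with None show ?thesis
      using wf_ctx_snoc_CTy_lookup[OF wf] subst_fresh by (simp add: lookup_append lookup_subst_ctx)
  next
    case Some
    with syn_var show ?thesis by (simp add: lookup_append lookup_subst_ctx)
  qed
  then show ?case using chk_syn_app.syn_var by simp
next
  case chk_sub
  then show ?case using sub_subst[OF _ \<tau>] by (auto intro: chk_syn_app.chk_sub)
next
  case (syn_ann A e n)
  then show ?case
    using \<tau> wf_ty_subst[of \<Psi> \<alpha> \<Psi>' A \<tau>] by (auto simp: wf_mono_def intro: chk_syn_app.intros)
next
  case chk_unit
  then show ?case using chk_syn_app.chk_unit by simp
next
  case syn_unit
  then show ?case using chk_syn_app.syn_unit by simp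
next
  case (chk_all b A e n)
  have \<tau>': "lc_at 0 \<tau>" "ftv \<tau> \<subseteq> ctx_tvars \<Psi>" using \<tau> by (auto simp: wf_mono_def wf_ty_def)
  note fresh = fresh_subst_ctx[OF chk_all(1) \<tau>'(2)]
  have "chk (\<Psi> @ subst_ctx \<alpha> \<tau> \<Psi>' @ [CTy b]) (subst_tm \<alpha> \<tau> e) (open_ty (subst \<alpha> \<tau> A) (TFree b)) n"
    using chk_all(5)[of "\<Psi>' @ [CTy b]"] fresh(1) \<tau>'(1) by (simp add: subst_open_ty subst_ctx_snoc)
  then show ?case
    using chk_all(2,3) fresh ftv_subst[of \<alpha> \<tau>] ftv_tm_subst_tm[of \<alpha> \<tau> e]
    by (auto intro!: chk_syn_app.chk_all)
next
  case (app_all s e A C n)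
  then show ?case
    using \<tau> wf_mono_subst[of \<Psi> \<alpha> \<Psi>' s \<tau>]
    by (auto simp: subst_open_ty wf_mono_def wf_ty_def intro: chk_syn_app.intros)
next
  case (chk_lam x A e B n)
  then show ?case
    using chk_lam(2)[of "\<Psi>' @ [CVar x A]"] by (auto simp: subst_ctx_snoc intro: chk_syn_app.intros)
next
  case (syn_lam s s' x e n)
  have "wf_mono (\<Psi> @ subst_ctx \<alpha> \<tau> \<Psi>') (subst \<alpha> \<tau> (TArr s s'))"
    using syn_lam(1) \<tau> by (rule wf_mono_subst)
  then show ?case
    using syn_lam(3)[of "\<Psi>' @ [CVar x s]"] by (auto simp: subst_ctx_snoc intro: chk_syn_app.intros)
next
  case syn_app
  then show ?case by (auto intro: chk_syn_app.intros)
next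
  case app_arr
  then show ?case by (auto intro: chk_syn_app.intros)
qed

theorem mainTheorem19:
  assumes "wf_ctx (\<Psi> @ [CTy \<alpha>] @ \<Psi>')"
    and "wf_mono \<Psi> \<tau>"
  shows "(\<forall>e C n. chk (\<Psi> @ [CTy \<alpha>] @ \<Psi>') e C n \<longrightarrow>
            (\<exists>m\<le>n. chk (\<Psi> @ subst_ctx \<alpha> \<tau> \<Psi>') (subst_tm \<alpha> \<tau> e) (subst \<alpha> \<tau> C) m))
       \<and> (\<forall>e C n. syn (\<Psi> @ [CTy \<alpha>] @ \<Psi>') e C n \<longrightarrow>
            (\<exists>m\<le>n. syn (\<Psi> @ subst_ctx \<alpha> \<tau> \<Psi>') (subst_tm \<alpha> \<tau> e) (subst \<alpha> \<tau> C) m))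
       \<and> (\<forall>e B C n. app (\<Psi> @ [CTy \<alpha>] @ \<Psi>') e B C n \<longrightarrow>
            (\<exists>m\<le>n. app (\<Psi> @ subst_ctx \<alpha> \<tau> \<Psi>') (subst_tm \<alpha> \<tau> e) (subst \<alpha> \<tau> B) (subst \<alpha> \<tau> C) m))"
proof -
  have "wf_ctx (\<Psi> @ [CTy \<alpha>])"
    using wf_ctx_appendD[of "\<Psi> @ [CTy \<alpha>]" \<Psi>'] assms(1) by simp
  then show ?thesis
    using typing_subst[OF _ assms(2)] by blast
qed

end
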